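(* Let $\mathrm X$ be the Cantor set, let $\mathrm U,\mathrm V\subseteq\mathrm X$ be open with $\mathrm U\neq\mathrm X$, and let $h:\mathrm U\to\mathrm V$ be a homeomorphism. For $n\in\mathbb Z$ let $\mathrm X_{-n}=\mathrm{dom}(h^n)$ and $h_n=h^n:\mathrm X_{-n}\to\mathrm X_n$, and let $R=\{(r,x,s,y)\in\mathbb Z\times\mathrm X\times\mathbb Z\times\mathrm X: x\in\mathrm X_{s-r},\ h^{r-s}(x)=y\}$. Let $(\mathrm U_k)_{k\ge0}$ be an increasing sequence of clopen subsets of $\mathrm X$ with $\bigcup_k\mathrm U_k=\mathrm U$. For each $k$, let $g_k=h|_{\mathrm U_k}:\mathrm U_k\to h(\mathrm U_k)$, $\mathrm X^k_{-n}=\mathrm{dom}(g_k^n)$, and $R_k=\{(r,x,s,y)\in\mathbb Z\times\mathrm X\times\mathbb Z\times\mathrm X: x\in\mathrm X^k_{s-r},\ h^{r-s}(x)=y\}$. Then each $R_k$ is an equivalence relation on $\mathbb Z\times\mathrm X$ whose quotient space is Hausdorff (i.e. $R_k$ is proper), $R_k\subseteq R_{k+1}$ for all $k$, and $R=\bigcup_{k}R_k$. In particular $R$ is approximately proper.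
   Context: Here $\mathrm{dom}(h^n)$ denotes the domain of the $n$-fold composition of the partial bijection $h$ (for $n<0$, of $(h^{-1})^{|n|}$; $\mathrm{dom}(h^0)=\mathrm X$). These data define partial actions of $\mathbb Z$ on $\mathrm X$. An equivalence relation on a locally compact, second countable, Hausdorff space is proper if its quotient space is Hausdorff, and approximately proper if it is the union of an increasing sequence of proper equivalence relations. *)

theory Defs
  imports "HOL-Analysis.Analysis"
begin

definition cantor_set :: "real set" where
  "cantor_set = {x. \<exists>d::nat \<Rightarrow> nat. (\<forall>i. d i \<in> {0, 2}) \<and> x = (\<Sum>i. real (d i) / 3 ^ Suc i)}"

text \<open>Domain of the n-fold iterate of the partial map f with domain A, inside the space X.\<close>
fun pdom :: "'a set \<Rightarrow> 'a set \<Rightarrow> ('a \<Rightarrow> 'a) \<Rightarrow> nat \<Rightarrow> 'a set" where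
  "pdom X A f 0 = X"
| "pdom X A f (Suc n) = {x \<in> A. f x \<in> pdom X A f n}"

text \<open>Integer powers of a partial bijection f : A -> f`A with inverse f'.\<close>
definition idom :: "'a set \<Rightarrow> 'a set \<Rightarrow> ('a \<Rightarrow> 'a) \<Rightarrow> ('a \<Rightarrow> 'a) \<Rightarrow> int \<Rightarrow> 'a set" where
  "idom X A f f' n = (if n \<ge> 0 then pdom X A f (nat n) else pdom X (f ` A) f' (nat (- n)))"

definition ipow :: "('a \<Rightarrow> 'a) \<Rightarrow> ('a \<Rightarrow> 'a) \<Rightarrow> int \<Rightarrow> 'a \<Rightarrow> 'a" where
  "ipow f f' n = (if n \<ge> 0 then f ^^ nat n else f' ^^ nat (- n))"

text \<open>The relation {(r,x,s,y). x \<in> X_{s-r}, h^{r-s} x = y}, where X_{-n} = dom(h^n).\<close>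
definition orbit_rel :: "'a set \<Rightarrow> 'a set \<Rightarrow> ('a \<Rightarrow> 'a) \<Rightarrow> ('a \<Rightarrow> 'a) \<Rightarrow> ((int \<times> 'a) \<times> (int \<times> 'a)) set" where
  "orbit_rel X A f f' = {((r, x), (s, y)). x \<in> idom X A f f' (r - s) \<and> ipow f f' (r - s) x = y}"

definition proper_equiv :: "'a topology \<Rightarrow> ('a \<times> 'a) set \<Rightarrow> bool" where
  "proper_equiv T E \<longleftrightarrow> equiv (topspace T) E \<and>
     (\<exists>Q. quotient_map T Q (\<lambda>x. E `` {x}) \<and> Hausdorff_space Q)"

definition approx_proper :: "'a topology \<Rightarrow> ('a \<times> 'a) set \<Rightarrow> bool" where
  "approx_proper T E \<longleftrightarrow> (\<exists>Es :: nat \<Rightarrow> ('a \<times> 'a) set.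
     (\<forall>k. proper_equiv T (Es k)) \<and> (\<forall>k. Es k \<subseteq> Es (Suc k)) \<and> E = (\<Union>k. Es k))"

end

theory Submission
  imports Defs
begin

text \<open>
  Let \<open>A \<subseteq> X\<close> be clopen, \<open>f : A \<rightarrow> f`A\<close> a homeomorphism onto an open set with inverse \<open>g\<close>.
  The integer powers of the partial bijection \<open>f\<close> (with domains \<open>idom n\<close>, maps \<open>ipow n\<close>)
  form a partial action of \<open>\<int>\<close>: \<open>ipow (-n)\<close> inverts \<open>ipow n\<close> and \<open>ipow m \<circ> ipow n\<close> is
  defined only where \<open>ipow (n + m)\<close> is and agrees with it.  Hence the orbit relation
  \<open>(r,x) ~ (s,y) \<longleftrightarrow> ipow (r - s) x = y\<close> on \<open>\<int> \<times> X\<close> is an equivalence relation.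

  Properness is obtained from a general criterion: an equivalence relation has a Hausdorff
  quotient if saturations of open sets are open and inequivalent points have neighbourhoods
  with no related pairs.  Saturation is open because each \<open>idom n\<close> is open and \<open>ipow n\<close>
  continuous; separation uses that the forward domains \<open>idom n\<close>, \<open>n \<ge> 0\<close>, are also closed
  (here the clopenness of \<open>A\<close> enters) together with the Hausdorff property of \<open>X\<close>.

  Finally the orbit relation is monotone in \<open>A\<close> and commutes with increasing unions, which
  gives the approximation of the orbit relation of \<open>h\<close> by those of its restrictions to \<open>U\<^sub>k\<close>.
\<close>

lemma quotient_map_exists: "\<exists>Q. quotient_map T Q \<pi>"
proof -
  define L where "L U \<longleftrightarrow> U \<subseteq> \<pi> ` topspace T \<and> openin T {x \<in> topspace T. \<pi> x \<in> U}" for U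
  have "istopology L"
    unfolding istopology_def
  proof (intro conjI allI impI ballI)
    fix S S' assume "L S" "L S'"
    moreover have "{x \<in> topspace T. \<pi> x \<in> S \<inter> S'}
        = {x \<in> topspace T. \<pi> x \<in> S} \<inter> {x \<in> topspace T. \<pi> x \<in> S'}" by auto
    ultimately show "L (S \<inter> S')" unfolding L_def by auto
  next
    fix K assume K: "\<forall>S\<in>K. L S"
    have "{x \<in> topspace T. \<pi> x \<in> \<Union>K} = (\<Union>S\<in>K. {x \<in> topspace T. \<pi> x \<in> S})" by auto
    then show "L (\<Union>K)" using K unfolding L_def by auto
  qed
  then have open_Q: "openin (topology L) = L"
    by (rule topology_inverse')
  have "{x \<in> topspace T. \<pi> x \<in> \<pi> ` topspace T} = topspace T" by blast
  then have "L (\<pi> ` topspace T)" unfolding L_def by simp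
  then have "topspace (topology L) = \<pi> ` topspace T"
    unfolding topspace_def open_Q L_def by blast
  then have "quotient_map T (topology L) \<pi>"
    unfolding quotient_map_def open_Q L_def by auto
  then show ?thesis ..
qed

lemma Hausdorff_space_open_quotient:
  assumes quot: "quotient_map T Q \<pi>"
    and saturate: "\<And>W. openin T W \<Longrightarrow> openin T {x \<in> topspace T. \<pi> x \<in> \<pi> ` W}"
    and separate: "\<And>p q. \<lbrakk>p \<in> topspace T; q \<in> topspace T; \<pi> p \<noteq> \<pi> q\<rbrakk> \<Longrightarrow>
       \<exists>W1 W2. openin T W1 \<and> openin T W2 \<and> p \<in> W1 \<and> q \<in> W2 \<and> disjnt (\<pi> ` W1) (\<pi> ` W2)"
  shows "Hausdorff_space Q"
proof -
  have image_Q: "\<pi> ` topspace T = topspace Q"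
    using quot by (simp add: quotient_map_def)
  have open_Q: "openin Q U \<longleftrightarrow> openin T {x \<in> topspace T. \<pi> x \<in> U}" if "U \<subseteq> topspace Q" for U
    using quot that by (simp add: quotient_map_def)
  have open_map: "openin Q (\<pi> ` W)" if "openin T W" for W
  proof -
    have "\<pi> ` W \<subseteq> topspace Q"
      using openin_subset[OF that] image_Q by blast
    then show ?thesis
      using open_Q saturate[OF that] by simp
  qed
  show ?thesis
    unfolding Hausdorff_space_def
  proof (intro allI impI)
    fix c1 c2 assume c: "c1 \<in> topspace Q \<and> c2 \<in> topspace Q \<and> c1 \<noteq> c2"
    then obtain p q where p: "p \<in> topspace T" "c1 = \<pi> p" and q: "q \<in> topspace T" "c2 = \<pi> q"
      unfolding image_Q[symmetric] by blast
    then obtain W1 W2 where "openin T W1" "openin T W2" "p \<in> W1" "q \<in> W2"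
        "disjnt (\<pi> ` W1) (\<pi> ` W2)"
      using separate c by blast
    then show "\<exists>U V. openin Q U \<and> openin Q V \<and> c1 \<in> U \<and> c2 \<in> V \<and> disjnt U V"
      using open_map p(2) q(2) by blast
  qed
qed

lemma proper_equivI:
  assumes equiv: "equiv (topspace T) E"
    and saturate: "\<And>W. openin T W \<Longrightarrow> openin T {p \<in> topspace T. \<exists>q\<in>W. (p, q) \<in> E}"
    and separate: "\<And>p q. \<lbrakk>p \<in> topspace T; q \<in> topspace T; (p, q) \<notin> E\<rbrakk> \<Longrightarrow>
       \<exists>W1 W2. openin T W1 \<and> openin T W2 \<and> p \<in> W1 \<and> q \<in> W2 \<and> (\<forall>a\<in>W1. \<forall>b\<in>W2. (a, b) \<notin> E)"
  shows "proper_equiv T E"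
proof -
  define \<pi> where "\<pi> x = E `` {x}" for x
  have class_eq: "\<pi> a = \<pi> b \<longleftrightarrow> (a, b) \<in> E" if "a \<in> topspace T" "b \<in> topspace T" for a b
    unfolding \<pi>_def using eq_equiv_class_iff[OF equiv that] .
  obtain Q where quot: "quotient_map T Q \<pi>"
    using quotient_map_exists by blast
  have "Hausdorff_space Q"
  proof (rule Hausdorff_space_open_quotient[OF quot])
    fix W assume W: "openin T W"
    have "{x \<in> topspace T. \<pi> x \<in> \<pi> ` W} = {p \<in> topspace T. \<exists>q\<in>W. (p, q) \<in> E}"
      using class_eq openin_subset[OF W] by blast
    then show "openin T {x \<in> topspace T. \<pi> x \<in> \<pi> ` W}"
      using saturate[OF W] by simp
  next
    fix p q assume pq: "p \<in> topspace T" "q \<in> topspace T" "\<pi> p \<noteq> \<pi> q"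
    then have "(p, q) \<notin> E"
      using class_eq by simp
    then obtain W1 W2 where W: "openin T W1" "openin T W2" "p \<in> W1" "q \<in> W2"
        and unrelated: "\<forall>a\<in>W1. \<forall>b\<in>W2. (a, b) \<notin> E"
      using separate[OF pq(1,2)] by blast
    have "\<pi> a \<noteq> \<pi> b" if "a \<in> W1" "b \<in> W2" for a b
    proof -
      have "a \<in> topspace T" "b \<in> topspace T"
        using that openin_subset[OF W(1)] openin_subset[OF W(2)] by auto
      then show ?thesis
        using class_eq unrelated that by simp
    qed
    then have "disjnt (\<pi> ` W1) (\<pi> ` W2)"
      unfolding disjnt_def by blast
    then show "\<exists>W1 W2. openin T W1 \<and> openin T W2 \<and> p \<in> W1 \<and> q \<in> W2 \<and> disjnt (\<pi> ` W1) (\<pi> ` W2)"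
      using W by blast
  qed
  then show ?thesis
    using equiv quot unfolding proper_equiv_def \<pi>_def by auto
qed

lemma pdom_subset: "A \<subseteq> X \<Longrightarrow> pdom X A f n \<subseteq> X"
  by (cases n) auto

lemma pdom_add:
  assumes "A \<subseteq> X"
  shows "x \<in> pdom X A f (a + b) \<longleftrightarrow> x \<in> pdom X A f a \<and> (f ^^ a) x \<in> pdom X A f b"
proof (induction a arbitrary: x)
  case 0
  then show ?case using pdom_subset[OF assms] by auto
next
  case (Suc a)
  then show ?case by (simp add: funpow_Suc_right del: funpow.simps)
qed

lemma pdom_mono: "A \<subseteq> A' \<Longrightarrow> pdom X A f n \<subseteq> pdom X A' f n"
  by (induction n) auto

lemma pdom_Union:
  assumes "incseq C"
  shows "pdom X (\<Union>k. C k) f n = (\<Union>k. pdom X (C k) f n)"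
proof
  show "(\<Union>k. pdom X (C k) f n) \<subseteq> pdom X (\<Union>k. C k) f n"
    by (intro UN_least pdom_mono) blast
  show "pdom X (\<Union>k. C k) f n \<subseteq> (\<Union>k. pdom X (C k) f n)"
  proof (induction n)
    case 0
    then show ?case by simp
  next
    case (Suc n)
    show ?case
    proof
      fix x assume "x \<in> pdom X (\<Union>k. C k) f (Suc n)"
      then obtain k1 k2 where "x \<in> C k1" "f x \<in> pdom X (C k2) f n"
        using Suc by auto
      moreover have "C k1 \<subseteq> C (max k1 k2)" and k2: "C k2 \<subseteq> C (max k1 k2)"
        using monoD[OF assms] by simp_all
      ultimately have "x \<in> C (max k1 k2)" "f x \<in> pdom X (C (max k1 k2)) f n"
        using pdom_mono[OF k2, of X f n] by blast+
      then show "x \<in> (\<Union>k. pdom X (C k) f (Suc n))"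
        by auto
    qed
  qed
qed

lemma int_sign_cases:
  fixes n :: int
  obtains (nonneg) p where "n = int p" | (nonpos) p where "n = - int p"
proof (cases "0 \<le> n")
  case True
  then show ?thesis using nonneg[of "nat n"] by simp
next
  case False
  then show ?thesis using nonpos[of "nat (- n)"] by simp
qed

lemma idom_zero [simp]: "idom X A f g 0 = X" "ipow f g 0 = id"
  by (simp_all add: idom_def ipow_def)

lemma orbit_rel_iff:
  "((r, x), (s, y)) \<in> orbit_rel X A f g \<longleftrightarrow> x \<in> idom X A f g (r - s) \<and> ipow f g (r - s) x = y"
  by (simp add: orbit_rel_def)

locale partial_bijection =
  fixes X A :: "'a set" and f g :: "'a \<Rightarrow> 'a"
  assumes dom_subset: "A \<subseteq> X"
    and image_subset: "f ` A \<subseteq> X"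
    and left_inverse: "\<And>x. x \<in> A \<Longrightarrow> g (f x) = x"
begin

lemma image_converse: "g ` f ` A = A"
  using left_inverse by force

text \<open>The inverse \<open>g : f`A \<rightarrow> A\<close> is again a partial bijection; this lets every statement about
  negative powers be reduced to one about positive powers.\<close>

lemma converse: "partial_bijection X (f ` A) g f"
  using dom_subset image_subset left_inverse by unfold_locales auto

lemma pdom_inverse:
  assumes "x \<in> pdom X A f n"
  shows "(f ^^ n) x \<in> pdom X (f ` A) g n \<and> (g ^^ n) ((f ^^ n) x) = x"
  using assms
proof (induction n arbitrary: x)
  case 0
  then show ?case by simp
next
  case (Suc n)
  then have x: "x \<in> A" and IH: "(f ^^ n) (f x) \<in> pdom X (f ` A) g n"
      "(g ^^ n) ((f ^^ n) (f x)) = f x"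
    by auto
  define y where "y = (f ^^ n) (f x)"
  have "(f ^^ Suc n) x = y"
    unfolding y_def by (simp only: funpow_Suc_right comp_def)
  moreover have "y \<in> pdom X (f ` A) g (n + Suc 0)"
    unfolding pdom_add[OF image_subset] y_def using IH x left_inverse dom_subset by auto
  moreover have "(g ^^ Suc n) y = x"
    using IH x left_inverse by (simp add: y_def)
  ultimately show ?case
    by simp
qed

lemma idom_nonneg [simp]:
  "idom X A f g (int n) = pdom X A f n" "ipow f g (int n) = f ^^ n"
  by (simp_all add: idom_def ipow_def)

lemma idom_nonpos [simp]:
  "idom X A f g (- int n) = pdom X (f ` A) g n" "ipow f g (- int n) = g ^^ n"
  by (cases "n = 0"; simp add: idom_def ipow_def)+

lemma idom_converse:
  "idom X (f ` A) g f n = idom X A f g (- n)" "ipow g f n = ipow f g (- n)"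
proof -
  consider "n < 0" | "n = 0" | "n > 0" by linarith
  then show "idom X (f ` A) g f n = idom X A f g (- n)" "ipow g f n = ipow f g (- n)"
    unfolding idom_def ipow_def image_converse by (cases; simp)+
qed

lemma idom_subset: "idom X A f g n \<subseteq> X"
  using pdom_subset[OF dom_subset] pdom_subset[OF image_subset] by (simp add: idom_def)

lemma ipow_inverse:
  assumes "x \<in> idom X A f g n"
  shows "ipow f g n x \<in> idom X A f g (- n) \<and> ipow f g (- n) (ipow f g n x) = x"
proof (cases n rule: int_sign_cases)
  case (nonneg p)
  then show ?thesis using assms pdom_inverse by simp
next
  case (nonpos p)
  then show ?thesis
    using assms partial_bijection.pdom_inverse[OF converse] image_converse by simp
qed

lemma pdom_forward_backward:
  assumes x: "x \<in> pdom X A f p" and y: "(f ^^ p) x \<in> pdom X (f ` A) g q"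
  shows "x \<in> idom X A f g (int p - int q) \<and> ipow f g (int p - int q) x = (g ^^ q) ((f ^^ p) x)"
proof (cases "q \<le> p")
  case True
  define w where "w = (f ^^ (p - q)) x"
  have "x \<in> pdom X A f ((p - q) + q)"
    using x True by simp
  then have x': "x \<in> pdom X A f (p - q)" and w: "w \<in> pdom X A f q"
    unfolding w_def pdom_add[OF dom_subset] by auto
  have "f ^^ p = f ^^ q \<circ> f ^^ (p - q)"
    using True by (simp add: funpow_add[symmetric])
  then have "(f ^^ p) x = (f ^^ q) w"
    unfolding w_def by simp
  then have "(g ^^ q) ((f ^^ p) x) = w"
    using pdom_inverse[OF w] by simp
  have eq: "int p - int q = int (p - q)"
    using True by simp
  show ?thesis
    unfolding eq idom_nonneg using x' w_def \<open>(g ^^ q) ((f ^^ p) x) = w\<close> by simp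
next
  case False
  define y where "y = (f ^^ p) x"
  have "y \<in> pdom X (f ` A) g (p + (q - p))"
    using y False unfolding y_def by simp
  moreover have "(g ^^ p) y = x"
    using pdom_inverse[OF x] unfolding y_def by simp
  ultimately have x': "x \<in> pdom X (f ` A) g (q - p)"
    unfolding pdom_add[OF image_subset] by simp
  have "g ^^ q = g ^^ (q - p) \<circ> g ^^ p"
    using False by (simp add: funpow_add[symmetric])
  then have g_q: "(g ^^ q) y = (g ^^ (q - p)) ((g ^^ p) y)"
    by simp
  have eq: "int p - int q = - int (q - p)"
    using False by simp
  show ?thesis
    unfolding eq idom_nonpos using x' \<open>(g ^^ p) y = x\<close> g_q
    unfolding y_def by simp
qed

text \<open>The case \<open>n < 0\<close> is the case \<open>n \<ge> 0\<close> for the inverse partial bijection.\<close>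

lemma ipow_compose_nonneg:
  assumes x: "x \<in> pdom X A f p" and y: "(f ^^ p) x \<in> idom X A f g m"
  shows "x \<in> idom X A f g (int p + m) \<and> ipow f g (int p + m) x = ipow f g m ((f ^^ p) x)"
proof (cases m rule: int_sign_cases)
  case (nonneg q)
  have eq: "int p + m = int (p + q)"
    using nonneg by simp
  have "x \<in> pdom X A f (p + q)"
    unfolding pdom_add[OF dom_subset] using x y nonneg by simp
  moreover have "(f ^^ (p + q)) x = (f ^^ q) ((f ^^ p) x)"
    unfolding add.commute[of p q] funpow_add by simp
  ultimately show ?thesis
    unfolding eq idom_nonneg using nonneg by simp
next
  case (nonpos q)
  have eq: "int p + m = int p - int q"
    using nonpos by simp
  show ?thesis
    unfolding eq using pdom_forward_backward[OF x] y nonpos by simp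
qed

lemma ipow_compose:
  assumes x: "x \<in> idom X A f g n" and y: "ipow f g n x \<in> idom X A f g m"
  shows "x \<in> idom X A f g (n + m) \<and> ipow f g (n + m) x = ipow f g m (ipow f g n x)"
proof (cases n rule: int_sign_cases)
  case (nonneg p)
  then show ?thesis using ipow_compose_nonneg assms by simp
next
  case (nonpos p)
  have "x \<in> idom X (f ` A) g f (int p + - m) \<and>
      ipow g f (int p + - m) x = ipow g f (- m) ((g ^^ p) x)"
    by (rule partial_bijection.ipow_compose_nonneg[OF converse])
      (use x y nonpos in \<open>simp_all add: idom_converse\<close>)
  then show ?thesis
    using nonpos by (simp add: idom_converse)
qed

text \<open>Reflexivity, symmetry and transitivity of the orbit relation are the identity, inverse
  and composition laws of the partial action.\<close>

lemma orbit_rel_equiv: "equiv (UNIV \<times> X) (orbit_rel X A f g)"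
proof (rule equivI)
  show "orbit_rel X A f g \<subseteq> (UNIV \<times> X) \<times> (UNIV \<times> X)"
    using idom_subset ipow_inverse by (fastforce simp: orbit_rel_def)
  show "refl_on (UNIV \<times> X) (orbit_rel X A f g)"
    by (auto simp: refl_on_def orbit_rel_def)
  show "sym (orbit_rel X A f g)"
  proof (rule symI, clarify)
    fix r x s y assume "((r, x), (s, y)) \<in> orbit_rel X A f g"
    then have "x \<in> idom X A f g (r - s)" "y = ipow f g (r - s) x"
      by (auto simp: orbit_rel_iff)
    then show "((s, y), (r, x)) \<in> orbit_rel X A f g"
      using ipow_inverse[of x "r - s"] by (simp add: orbit_rel_iff)
  qed
  show "trans (orbit_rel X A f g)"
  proof (rule transI)
    fix a b c assume "(a, b) \<in> orbit_rel X A f g" "(b, c) \<in> orbit_rel X A f g"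
    then show "(a, c) \<in> orbit_rel X A f g"
      using ipow_compose by (cases a; cases b; cases c) (fastforce simp: orbit_rel_iff)
  qed
qed

end

lemma pdom_openin:
  assumes A: "openin (top_of_set X) A" and f: "continuous_on A f" "f ` A \<subseteq> X"
  shows "openin (top_of_set X) (pdom X A f n) \<and> continuous_on (pdom X A f n) (f ^^ n)"
proof (induction n)
  case 0
  then show ?case by simp
next
  case (Suc n)
  have dom_eq: "pdom X A f (Suc n) = A \<inter> f -` pdom X A f n"
    by auto
  have "openin (top_of_set A) (A \<inter> f -` pdom X A f n)"
    using continuous_openin_preimage[OF f(1) _ Suc[THEN conjunct1]] f(2) by blast
  then have "openin (top_of_set X) (pdom X A f (Suc n))"
    unfolding dom_eq using A by (rule openin_trans)
  moreover have "continuous_on (pdom X A f (Suc n)) ((f ^^ n) \<circ> f)"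
  proof (rule continuous_on_compose)
    show "continuous_on (pdom X A f (Suc n)) f"
      using f(1) by (rule continuous_on_subset) auto
    show "continuous_on (f ` pdom X A f (Suc n)) (f ^^ n)"
      using Suc[THEN conjunct2] by (rule continuous_on_subset) auto
  qed
  ultimately show ?case
    by (simp add: funpow_Suc_right del: funpow.simps)
qed

lemma pdom_closedin:
  assumes A: "closedin (top_of_set X) A" and f: "continuous_on A f" "f ` A \<subseteq> X"
  shows "closedin (top_of_set X) (pdom X A f n)"
proof (induction n)
  case 0
  then show ?case by simp
next
  case (Suc n)
  have dom_eq: "pdom X A f (Suc n) = A \<inter> f -` pdom X A f n"
    by auto
  have "closedin (top_of_set A) (A \<inter> f -` pdom X A f n)"
    using continuous_closedin_preimage_gen[OF f(1) _ Suc] f(2) by blast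
  then show ?case
    unfolding dom_eq using A by (rule closedin_trans)
qed

abbreviation int_prod_topology :: "'a::topological_space set \<Rightarrow> (int \<times> 'a) topology" where
  "int_prod_topology X \<equiv> prod_topology euclidean (top_of_set X)"

lemma openin_int_slice:
  "openin (top_of_set X) N \<Longrightarrow> openin (int_prod_topology X) ({r} \<times> N)"
  by (simp add: openin_prod_Times_iff open_discrete)

locale partial_homeomorphism = partial_bijection X A f g
  for X A :: "'a::t2_space set" and f g +
  assumes dom_open: "openin (top_of_set X) A"
    and range_open: "openin (top_of_set X) (f ` A)"
    and continuous: "continuous_on A f"
    and continuous_inverse: "continuous_on (f ` A) g"
begin

lemma idom_openin:
  "openin (top_of_set X) (idom X A f g n) \<and> continuous_on (idom X A f g n) (ipow f g n)"
proof (cases n rule: int_sign_cases)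
  case (nonneg p)
  then show ?thesis
    using pdom_openin[OF dom_open continuous image_subset] by simp
next
  case (nonpos p)
  have "g ` f ` A \<subseteq> X"
    using image_converse dom_subset by simp
  then show ?thesis
    using pdom_openin[OF range_open continuous_inverse] nonpos by simp
qed

lemma idom_closedin:
  assumes "closedin (top_of_set X) A" and "0 \<le> n"
  shows "closedin (top_of_set X) (idom X A f g n)"
  using pdom_closedin[OF assms(1) continuous image_subset] assms(2) by (simp add: idom_def)

lemma ipow_preimage_openin:
  assumes "openin (top_of_set X) N"
  shows "openin (top_of_set X) {y \<in> idom X A f g n. ipow f g n y \<in> N}"
proof -
  have "ipow f g n \<in> idom X A f g n \<rightarrow> X"
    using ipow_inverse idom_subset by blast
  then have "openin (top_of_set (idom X A f g n)) (idom X A f g n \<inter> ipow f g n -` N)"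
    using continuous_openin_preimage[OF idom_openin[THEN conjunct2] _ assms] by blast
  then have "openin (top_of_set X) (idom X A f g n \<inter> ipow f g n -` N)"
    using idom_openin[THEN conjunct1] by (rule openin_trans)
  moreover have "{y \<in> idom X A f g n. ipow f g n y \<in> N} = idom X A f g n \<inter> ipow f g n -` N"
    by auto
  ultimately show ?thesis
    by simp
qed

text \<open>The saturation of an open set is open: if \<open>(s,y) ~ (r,x)\<close> with \<open>{r} \<times> N\<close> inside \<open>W\<close>, then
  \<open>{s} \<times> (ipow (s - r) -` N)\<close> is an open neighbourhood of \<open>(s,y)\<close> inside the saturation.\<close>

lemma orbit_saturation_openin:
  assumes W: "openin (int_prod_topology X) W"
  shows "openin (int_prod_topology X) {p \<in> topspace (int_prod_topology X). \<exists>q\<in>W. (p, q) \<in> orbit_rel X A f g}"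
    (is "openin _ ?S")
proof (rule openin_prod_topology_alt[THEN iffD2], intro allI impI)
  fix s y assume "(s, y) \<in> ?S"
  then obtain q where "q \<in> W" "((s, y), q) \<in> orbit_rel X A f g"
    by blast
  moreover obtain r x where "q = (r, x)"
    by (cases q)
  ultimately have rx: "(r, x) \<in> W" and y: "y \<in> idom X A f g (s - r)" "ipow f g (s - r) y = x"
    by (simp_all add: orbit_rel_iff)
  obtain R N where RN: "openin euclidean R" "openin (top_of_set X) N" "r \<in> R" "x \<in> N" "R \<times> N \<subseteq> W"
    using W[unfolded openin_prod_topology_alt, rule_format, OF rx] by blast
  define M where "M = {y' \<in> idom X A f g (s - r). ipow f g (s - r) y' \<in> N}"
  have "{s} \<times> M \<subseteq> ?S"
  proof
    fix p assume "p \<in> {s} \<times> M"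
    then obtain y' where p: "p = (s, y')" and "y' \<in> M"
      by blast
    then have y': "y' \<in> idom X A f g (s - r)" "ipow f g (s - r) y' \<in> N"
      unfolding M_def by simp_all
    then have "((s, y'), (r, ipow f g (s - r) y')) \<in> orbit_rel X A f g"
      by (simp add: orbit_rel_iff)
    moreover have "(r, ipow f g (s - r) y') \<in> W"
      using RN(3,5) y'(2) by blast
    moreover have "y' \<in> X"
      using idom_subset y'(1) by blast
    ultimately show "p \<in> ?S"
      unfolding p by auto
  qed
  moreover have "openin (top_of_set X) M" "y \<in> M"
    unfolding M_def using ipow_preimage_openin[OF RN(2)] y RN(4) by auto
  ultimately show "\<exists>U V. openin euclidean U \<and> openin (top_of_set X) V \<and> s \<in> U \<and> y \<in> V \<and> U \<times> V \<subseteq> ?S"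
    by (intro exI[of _ "{s}"] exI[of _ M]) (auto simp: open_discrete)
qed

lemma orbit_rel_sym: "(a, b) \<in> orbit_rel X A f g \<Longrightarrow> (b, a) \<in> orbit_rel X A f g"
  using orbit_rel_equiv by (meson equivE symD)

text \<open>Separation of inequivalent points \<open>(r,x)\<close>, \<open>(s,y)\<close> with \<open>s \<le> r\<close>: either \<open>x\<close> lies in the
  open complement of the closed domain \<open>idom (r - s)\<close>, or \<open>ipow (r - s) x \<noteq> y\<close> are separated in \<open>X\<close>.\<close>

lemma orbit_separation_forward:
  assumes A_closed: "closedin (top_of_set X) A" and xy: "x \<in> X" "y \<in> X" "s \<le> r"
    and unrelated: "((r, x), (s, y)) \<notin> orbit_rel X A f g"
  shows "\<exists>W1 W2. openin (int_prod_topology X) W1 \<and> openin (int_prod_topology X) W2 \<and>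
    (r, x) \<in> W1 \<and> (s, y) \<in> W2 \<and> (\<forall>a\<in>W1. \<forall>b\<in>W2. (a, b) \<notin> orbit_rel X A f g)"
proof (cases "x \<in> idom X A f g (r - s)")
  case False
  define W1 where "W1 = {r} \<times> (X - idom X A f g (r - s))"
  define W2 where "W2 = {s} \<times> X"
  have "openin (top_of_set X) (X - idom X A f g (r - s))"
    using idom_closedin[OF A_closed, of "r - s"] xy(3) by (simp add: openin_diff)
  then have "openin (int_prod_topology X) W1" "openin (int_prod_topology X) W2"
    unfolding W1_def W2_def by (simp_all add: openin_int_slice)
  moreover have "\<forall>a\<in>W1. \<forall>b\<in>W2. (a, b) \<notin> orbit_rel X A f g"
    unfolding W1_def W2_def by (auto simp: orbit_rel_iff)
  ultimately show ?thesis
    using False xy by (intro exI[of _ W1] exI[of _ W2]) (auto simp: W1_def W2_def)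
next
  case True
  then have "ipow f g (r - s) x \<noteq> y"
    using unrelated by (simp add: orbit_rel_iff)
  then obtain O1 O2 where O: "open O1" "open O2" "ipow f g (r - s) x \<in> O1" "y \<in> O2" "O1 \<inter> O2 = {}"
    unfolding separation_t2 by blast
  define W1 where "W1 = {r} \<times> {x' \<in> idom X A f g (r - s). ipow f g (r - s) x' \<in> X \<inter> O1}"
  define W2 where "W2 = {s} \<times> (X \<inter> O2)"
  have "openin (top_of_set X) (X \<inter> O1)" "openin (top_of_set X) (X \<inter> O2)"
    using O(1,2) by (simp_all add: openin_open_Int)
  then have "openin (int_prod_topology X) W1" "openin (int_prod_topology X) W2"
    unfolding W1_def W2_def by (simp_all only: openin_int_slice ipow_preimage_openin)
  moreover have "\<forall>a\<in>W1. \<forall>b\<in>W2. (a, b) \<notin> orbit_rel X A f g"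
    using O(5) unfolding W1_def W2_def by (auto simp: orbit_rel_iff)
  moreover have "ipow f g (r - s) x \<in> X"
    using True ipow_inverse idom_subset by blast
  ultimately show ?thesis
    using True O xy by (intro exI[of _ W1] exI[of _ W2]) (auto simp: W1_def W2_def)
qed

lemma orbit_separation:
  assumes A_closed: "closedin (top_of_set X) A"
    and p: "p \<in> topspace (int_prod_topology X)" and q: "q \<in> topspace (int_prod_topology X)"
    and unrelated: "(p, q) \<notin> orbit_rel X A f g"
  shows "\<exists>W1 W2. openin (int_prod_topology X) W1 \<and> openin (int_prod_topology X) W2 \<and>
    p \<in> W1 \<and> q \<in> W2 \<and> (\<forall>a\<in>W1. \<forall>b\<in>W2. (a, b) \<notin> orbit_rel X A f g)"
proof -
  obtain r x s y where pq: "p = (r, x)" "q = (s, y)" and xy: "x \<in> X" "y \<in> X"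
    using p q by (cases p; cases q) auto
  show ?thesis
  proof (cases "s \<le> r")
    case True
    then show ?thesis
      using orbit_separation_forward[OF A_closed xy True] unrelated pq by simp
  next
    case False
    then have le: "r \<le> s"
      by simp
    have swapped: "((s, y), (r, x)) \<notin> orbit_rel X A f g"
      using unrelated orbit_rel_sym pq by blast
    obtain W2 W1 where W: "openin (int_prod_topology X) W2" "openin (int_prod_topology X) W1"
        "(s, y) \<in> W2" "(r, x) \<in> W1" and unrelated': "\<forall>b\<in>W2. \<forall>a\<in>W1. (b, a) \<notin> orbit_rel X A f g"
      using orbit_separation_forward[OF A_closed xy(2,1) le swapped] by blast
    have "\<forall>a\<in>W1. \<forall>b\<in>W2. (a, b) \<notin> orbit_rel X A f g"
      using unrelated' orbit_rel_sym by blast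
    then show ?thesis
      using W pq by (intro exI[of _ W1] exI[of _ W2]) simp
  qed
qed

lemma orbit_rel_proper:
  assumes "closedin (top_of_set X) A"
  shows "proper_equiv (int_prod_topology X) (orbit_rel X A f g)"
proof (rule proper_equivI)
  show "equiv (topspace (int_prod_topology X)) (orbit_rel X A f g)"
    using orbit_rel_equiv by simp
qed (use orbit_saturation_openin orbit_separation[OF assms] in auto)

end

lemma idom_mono:
  assumes "A \<subseteq> A'"
  shows "idom X A f g n \<subseteq> idom X A' f g n"
  using pdom_mono[OF assms] pdom_mono[OF image_mono[OF assms]]
  by (cases "0 \<le> n") (simp_all add: idom_def)

lemma orbit_rel_mono:
  assumes "A \<subseteq> A'"
  shows "orbit_rel X A f g \<subseteq> orbit_rel X A' f g"
proof
  fix p assume p: "p \<in> orbit_rel X A f g"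
  obtain r x s y where "p = ((r, x), (s, y))"
    by (metis prod.collapse)
  then show "p \<in> orbit_rel X A' f g"
    using p idom_mono[OF assms, of X f g "r - s"] by (auto simp: orbit_rel_iff)
qed

lemma idom_Union:
  assumes "incseq C"
  shows "idom X (\<Union>k. C k) f g n = (\<Union>k. idom X (C k) f g n)"
proof -
  have "incseq (\<lambda>k. f ` C k)"
    using assms by (simp add: incseq_def image_mono)
  then show ?thesis
    using pdom_Union[OF assms] pdom_Union[of "\<lambda>k. f ` C k"] by (simp add: idom_def image_UN)
qed

lemma orbit_rel_Union:
  assumes "incseq C"
  shows "orbit_rel X (\<Union>k. C k) f g = (\<Union>k. orbit_rel X (C k) f g)"
  by (auto simp: orbit_rel_def idom_Union[OF assms])

lemma partial_homeomorphism_restrict: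
  fixes X :: "'a::t2_space set"
  assumes hom: "homeomorphism U V h h'"
    and U: "openin (top_of_set X) U" and V: "openin (top_of_set X) V"
    and A: "openin (top_of_set X) A" "A \<subseteq> U"
  shows "partial_homeomorphism X A h h'"
proof -
  have hUV: "h ` U = V" and inv: "\<And>x. x \<in> U \<Longrightarrow> h' (h x) = x"
    and cont: "continuous_on U h" "continuous_on V h'"
    using hom by (auto simp: homeomorphism_def)
  have "U \<subseteq> X"
    using openin_subset[OF U] by simp
  then have "openin (top_of_set U) A"
    using openin_subset_trans[OF A(1) A(2)] by blast
  then have "openin (top_of_set V) (h ` A)"
    using homeomorphism_imp_open_map[OF hom] by blast
  then have "openin (top_of_set X) (h ` A)"
    using V by (rule openin_trans)
  moreover have "h ` A \<subseteq> V"
    using A(2) hUV by blast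
  ultimately show ?thesis
    using A openin_subset[OF A(1)] openin_subset[OF \<open>openin (top_of_set X) (h ` A)\<close>] inv
      continuous_on_subset[OF cont(1)] continuous_on_subset[OF cont(2)]
    by unfold_locales auto
qed

theorem mainTheorem8:
  fixes U V :: "real set" and h h' :: "real \<Rightarrow> real" and Us :: "nat \<Rightarrow> real set"
  assumes "openin (top_of_set cantor_set) U"
    and "openin (top_of_set cantor_set) V"
    and "U \<noteq> cantor_set"
    and "homeomorphism U V h h'"
    and "\<And>k. closedin (top_of_set cantor_set) (Us k)"
    and "\<And>k. openin (top_of_set cantor_set) (Us k)"
    and "\<And>k. Us k \<subseteq> Us (Suc k)"
    and "(\<Union>k. Us k) = U"
  shows "(\<forall>k. proper_equiv (prod_topology (euclidean :: int topology) (top_of_set cantor_set))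
                (orbit_rel cantor_set (Us k) h h' ))
       \<and> (\<forall>k. orbit_rel cantor_set (Us k) h h' \<subseteq> orbit_rel cantor_set (Us (Suc k)) h h')
       \<and> orbit_rel cantor_set U h h' = (\<Union>k. orbit_rel cantor_set (Us k) h h')
       \<and> approx_proper (prod_topology (euclidean :: int topology) (top_of_set cantor_set))
           (orbit_rel cantor_set U h h')"
proof -
  have proper: "proper_equiv (int_prod_topology cantor_set) (orbit_rel cantor_set (Us k) h h')" for k
  proof -
    have "Us k \<subseteq> U"
      using assms(8) by blast
    then have "partial_homeomorphism cantor_set (Us k) h h'"
      using partial_homeomorphism_restrict[OF assms(4,1,2,6)] by blast
    then show ?thesis
      by (rule partial_homeomorphism.orbit_rel_proper) (rule assms(5))
  qed
  have mono: "orbit_rel cantor_set (Us k) h h' \<subseteq> orbit_rel cantor_set (Us (Suc k)) h h'" for k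
    using orbit_rel_mono[OF assms(7)] .
  have "incseq Us"
    by (rule incseq_SucI) (rule assms(7))
  then have union: "orbit_rel cantor_set U h h' = (\<Union>k. orbit_rel cantor_set (Us k) h h')"
    using orbit_rel_Union[OF \<open>incseq Us\<close>, of cantor_set h h'] assms(8) by simp
  have "approx_proper (int_prod_topology cantor_set) (orbit_rel cantor_set U h h')"
    unfolding approx_proper_def
    by (intro exI[of _ "\<lambda>k. orbit_rel cantor_set (Us k) h h'"]) (simp add: proper mono union)
  then show ?thesis
    using proper mono union by simp
qed

end
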